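(* Let $n>2k$, $k\ge t+3$, and let $\mathcal F\subseteq\binom{[n]}{k}$ be a maximal $t$-intersecting family with $\tau_t(\mathcal F)=t+2$ and $\tau_t(\mathcal T_t(\mathcal F))=t+1$. Suppose there exist $U_0\in\mathcal U_t(\mathcal F)$ and $F_0\in\mathcal F$ with $|U_0\cap F_0|=t-1$ such that $\mathcal T_t(\mathcal F)\subseteq\binom{U_0\cup F_0}{t+2}$. Then at least one of the following holds: (i) $|\mathcal T_t(\mathcal F)|<\max\left\{(k-t)(k-t+1),\ (t+2)(k-t)+1,\ \binom{t+4}{2}\right\}$; (ii) there exist $M\in\binom{[n]}{k+2}$ and $W\in\binom{M}{t+2}$ such that $\mathcal T_t(\mathcal F)=\left\{T\in\binom{M}{t+2}: |T\cap W|\ge t+1\right\}$.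
   Context: A family is $t$-intersecting if any two members meet in at least $t$ elements. A $t$-cover of a family $\mathcal G$ of subsets of $[n]$ is a set $S\subseteq[n]$ with $|S\cap G|\ge t$ for all $G\in\mathcal G$; $\tau_t(\mathcal G)$ is the minimum size of a $t$-cover, and $\mathcal T_t(\mathcal G)$ is the set of all $t$-covers of $\mathcal G$ of size $\tau_t(\mathcal G)$. $\mathcal U_t(\mathcal F)=\mathcal T_t(\mathcal T_t(\mathcal F))$ is the family of all minimum-size $t$-covers of $\mathcal T_t(\mathcal F)$. A $t$-intersecting $\mathcal F\subseteq\binom{[n]}{k}$ is maximal if no $t$-intersecting subfamily of $\binom{[n]}{k}$ properly contains it. *)

theory Defs
  imports Main
begin

definition ksubsets :: "nat \<Rightarrow> nat \<Rightarrow> nat set set" where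
  "ksubsets n k = {A. A \<subseteq> {1..n} \<and> card A = k}"

definition t_intersecting :: "nat \<Rightarrow> nat set set \<Rightarrow> bool" where
  "t_intersecting t F \<longleftrightarrow> (\<forall>A\<in>F. \<forall>B\<in>F. t \<le> card (A \<inter> B))"

definition t_cover :: "nat \<Rightarrow> nat \<Rightarrow> nat set set \<Rightarrow> nat set \<Rightarrow> bool" where
  "t_cover n t G S \<longleftrightarrow> S \<subseteq> {1..n} \<and> (\<forall>X\<in>G. t \<le> card (S \<inter> X))"

definition tau :: "nat \<Rightarrow> nat \<Rightarrow> nat set set \<Rightarrow> nat" where
  "tau n t G = (LEAST m. \<exists>S. t_cover n t G S \<and> card S = m)"

definition Tcov :: "nat \<Rightarrow> nat \<Rightarrow> nat set set \<Rightarrow> nat set set" where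
  "Tcov n t G = {S. t_cover n t G S \<and> card S = tau n t G}"

definition Ucov :: "nat \<Rightarrow> nat \<Rightarrow> nat set set \<Rightarrow> nat set set" where
  "Ucov n t F = Tcov n t (Tcov n t F)"

definition maximal_t_intersecting :: "nat \<Rightarrow> nat \<Rightarrow> nat \<Rightarrow> nat set set \<Rightarrow> bool" where
  "maximal_t_intersecting n k t F \<longleftrightarrow>
     F \<subseteq> ksubsets n k \<and> t_intersecting t F \<and>
     (\<forall>G. F \<subset> G \<and> G \<subseteq> ksubsets n k \<longrightarrow> \<not> t_intersecting t G)"

end

(*
  Put U = U0 and R = F0 - U0, so card U = t + 1 and card R = k - t + 1. Every minimum t-cover T
  of F is a (t + 2)-subset of U \<union> R meeting U in at least t points, and since n \<ge> 2k two such
  covers can be padded by disjoint sets to members of the maximal family F; hence the minimum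
  t-covers form a t-intersecting family.

  At most card R of them contain U. Every other cover misses one point of U and is determined
  by that point and the pair T - U \<subseteq> R, and covers missing different points of U have
  intersecting pairs. Call a pair repeated if it occurs with two different missing points;
  every occurring pair then meets every repeated pair. Counting pairs gives one of the three
  numerical bounds if there is no repeated pair, exactly one, or two repeated pairs {r, x1},
  {r, x2} together with a cover avoiding r. Otherwise every cover meets insert r U in t + 1
  points, and there are only (t + 2)(k - t) + 1 such (t + 2)-subsets of U \<union> R: either the
  count is below the bound or the covers are all of them, which is alternative (ii).
*)
theory Submission
  imports Defs
begin

lemma mem_maximal_if_superset_of_t_cover:
  assumes max: "maximal_t_intersecting n k t F" and "t \<le> k"
    and cover: "t_cover n t F T" and "T \<subseteq> G" and G: "G \<in> ksubsets n k"
  shows "G \<in> F"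
proof (rule ccontr)
  assume "G \<notin> F"
  have "finite G" using G finite_subset unfolding ksubsets_def by blast
  have "t \<le> card (G \<inter> X)" if "X \<in> F" for X
  proof -
    have "t \<le> card (T \<inter> X)" using cover that unfolding t_cover_def by blast
    also have "\<dots> \<le> card (G \<inter> X)" using \<open>finite G\<close> \<open>T \<subseteq> G\<close> by (intro card_mono) auto
    finally show ?thesis .
  qed
  moreover have "t \<le> card (G \<inter> G)" using G \<open>t \<le> k\<close> unfolding ksubsets_def by simp
  moreover have "t_intersecting t F" using max unfolding maximal_t_intersecting_def by blast
  ultimately have "t_intersecting t (insert G F)"
    unfolding t_intersecting_def by (auto simp: Int_commute)
  moreover have "F \<subset> insert G F" "insert G F \<subseteq> ksubsets n k"
    using \<open>G \<notin> F\<close> G max unfolding maximal_t_intersecting_def by auto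
  ultimately show False using max unfolding maximal_t_intersecting_def by blast
qed

lemma t_covers_t_intersect:
  assumes max: "maximal_t_intersecting n k t F" and "2 * k \<le> n" and "t \<le> k"
    and A: "t_cover n t F A" "card A \<le> k" and B: "t_cover n t F B" "card B \<le> k"
  shows "t \<le> card (A \<inter> B)"
proof -
  define Z where "Z = {1..n} - (A \<union> B)"
  have AB: "A \<subseteq> {1..n}" "B \<subseteq> {1..n}" using A B unfolding t_cover_def by auto
  have padded: "X \<union> Y \<in> F"
    if X: "t_cover n t F X" "card X \<le> k" "X \<subseteq> A \<union> B"
      and Y: "Y \<subseteq> Z" "card Y = k - card X" for X Y
  proof (rule mem_maximal_if_superset_of_t_cover[OF max \<open>t \<le> k\<close> X(1)])
    have "finite X" "finite Y" "X \<inter> Y = {}"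
      using X(3) Y(1) AB unfolding Z_def by (auto intro: finite_subset)
    then have "card (X \<union> Y) = k" using X(2) Y(2) by (simp add: card_Un_disjoint)
    then show "X \<union> Y \<in> ksubsets n k" using X(3) Y(1) AB unfolding ksubsets_def Z_def by auto
  qed simp
  have "card (A \<union> B) \<le> card A + card B" by (rule card_Un_le)
  moreover have "card Z = n - card (A \<union> B)"
    unfolding Z_def using AB by (subst card_Diff_subset) (auto intro: finite_subset)
  ultimately have "(k - card A) + (k - card B) \<le> card Z" using assms by linarith
  then obtain ZA where ZA: "ZA \<subseteq> Z" "card ZA = k - card A"
    by (metis le_add1 le_trans obtain_subset_with_card_n)
  moreover have "card (Z - ZA) = card Z - card ZA"
    using ZA(1) by (intro card_Diff_subset) (auto intro: finite_subset simp: Z_def)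
  then have "k - card B \<le> card (Z - ZA)" using ZA(2) \<open>_ \<le> card Z\<close> by linarith
  then obtain ZB where ZB: "ZB \<subseteq> Z - ZA" "card ZB = k - card B"
    by (meson obtain_subset_with_card_n)
  ultimately have "A \<union> ZA \<in> F" "B \<union> ZB \<in> F"
    using padded[OF A Un_upper1 ZA] padded[OF B Un_upper2 _ ZB(2)] ZB(1) by auto
  moreover have "(A \<union> ZA) \<inter> (B \<union> ZB) = A \<inter> B"
    using ZA ZB unfolding Z_def by auto
  ultimately show ?thesis
    using max unfolding maximal_t_intersecting_def t_intersecting_def by metis
qed

lemma card_near_subsets_le:
  assumes "finite V" "W \<subseteq> V" "card W = s + 1"
  shows "card {S. S \<subseteq> V \<and> card S = s + 1 \<and> s \<le> card (S \<inter> W)}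
    \<le> 1 + (s + 1) * card (V - W)"
proof -
  let ?swap = "\<lambda>(w, y). insert y (W - {w})"
  have "finite W" using assms finite_subset by blast
  have "{S. S \<subseteq> V \<and> card S = s + 1 \<and> s \<le> card (S \<inter> W)}
      \<subseteq> insert W (?swap ` (W \<times> (V - W)))"
  proof clarify
    fix S assume S: "S \<subseteq> V" "card S = s + 1" "s \<le> card (S \<inter> W)"
      and not_swapped: "S \<notin> ?swap ` (W \<times> (V - W))"
    have "finite S" using S(1) assms(1) finite_subset by blast
    show "S = W"
    proof (rule ccontr)
      assume "S \<noteq> W"
      then have "\<not> S \<subseteq> W"
        using S(2) assms(3) card_subset_eq[OF \<open>finite W\<close>] by metis
      then obtain y where y: "y \<in> S - W" by blast
      have "card (S \<inter> W) \<le> card (S - {y})"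
        using y \<open>finite S\<close> by (intro card_mono) auto
      then have "card (S \<inter> W) = s" using S(2,3) y by simp
      then have "card (S - W) = 1" "card (W - S) = 1"
        using S(2) assms(3) \<open>finite S\<close> \<open>finite W\<close>
        by (simp_all add: card_Diff_subset_Int Int_commute)
      then obtain w where "S - W = {y}" "W - S = {w}"
        using y by (metis card_1_singletonE singletonD)
      then have "S = ?swap (w, y)" by auto
      moreover have "(w, y) \<in> W \<times> (V - W)" using \<open>W - S = {w}\<close> y S(1) by auto
      ultimately show False using not_swapped by blast
    qed
  qed
  then have "card {S. S \<subseteq> V \<and> card S = s + 1 \<and> s \<le> card (S \<inter> W)}
      \<le> card (insert W (?swap ` (W \<times> (V - W))))"
    using assms \<open>finite W\<close> by (intro card_mono) auto
  also have "\<dots> \<le> 1 + card (?swap ` (W \<times> (V - W)))"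
    using \<open>finite W\<close> assms(1) by (simp add: card_insert_if)
  also have "\<dots> \<le> 1 + card (W \<times> (V - W))"
    using \<open>finite W\<close> assms(1) by (intro add_left_mono card_image_le) simp
  also have "\<dots> = 1 + (s + 1) * card (V - W)" using assms by (simp add: card_cartesian_product)
  finally show ?thesis .
qed

definition tcov_bound :: "nat \<Rightarrow> nat \<Rightarrow> nat" where
  "tcov_bound t m = max (max (m * (m + 1)) ((t + 2) * m + 1)) ((t + 4) choose 2)"

lemma tcov_bound_ge:
  fixes t m :: nat
  shows "m * m + m \<le> tcov_bound t m" "t * m + 2 * m + 1 \<le> tcov_bound t m"
    "t * t + 7 * t + 12 \<le> 2 * tcov_bound t m"
proof -
  have "2 * (t + 4 choose 2) = t * t + 7 * t + 12"
    by (simp add: choose_two algebra_simps)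
  moreover have "(t + 4 choose 2) \<le> tcov_bound t m"
    unfolding tcov_bound_def by simp
  ultimately show "t * t + 7 * t + 12 \<le> 2 * tcov_bound t m"
    by linarith
  show "m * m + m \<le> tcov_bound t m" "t * m + 2 * m + 1 \<le> tcov_bound t m"
    unfolding tcov_bound_def by (simp_all add: algebra_simps)
qed

lemma tcov_bound_gt_pairs:
  assumes "3 \<le> m" shows "m + 1 + (m + 1 choose 2) < tcov_bound t m"
proof -
  have "3 * m \<le> m * m" using assms by simp
  moreover have "2 * (m + 1 choose 2) = m * m + m"
    by (simp add: choose_two algebra_simps)
  ultimately show ?thesis using assms tcov_bound_ge(1)[where t=t and m=m] by linarith
qed

lemma tcov_bound_gt_single_pair:
  assumes "3 \<le> m" "1 \<le> t" shows "3 * m + t < tcov_bound t m"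
proof -
  have "3 * m \<le> m * m" "3 * t \<le> t * m" using assms by simp_all
  moreover have "2 * m \<le> t * m" if "2 \<le> t" using that by simp
  ultimately show ?thesis using assms tcov_bound_ge(1,2)[where t=t and m=m]
    by (cases "t = 1") linarith+
qed

lemma tcov_bound_gt_two_pairs:
  assumes "3 \<le> m" "1 \<le> t" shows "2 * m + 3 * t + 2 < tcov_bound t m"
proof -
  have "3 * m \<le> m * m" using assms by simp
  moreover have "2 * t \<le> t * t" if "2 \<le> t" using that by simp
  moreover have "4 * t \<le> t * m" if "4 \<le> m" using that by simp
  ultimately show ?thesis using assms tcov_bound_ge[where t=t and m=m]
    by (cases "t = 1"; cases "m = 3") linarith+
qed

locale cover_configuration =
  fixes t m :: nat and U R :: "'a set" and TT :: "'a set set"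
  assumes finite_U: "finite U" and card_U: "card U = t + 1" and t_pos: "1 \<le> t"
    and finite_R: "finite R" and card_R: "card R = m + 1" and disjoint: "U \<inter> R = {}"
    and TT_subset: "T \<in> TT \<Longrightarrow> T \<subseteq> U \<union> R"
    and card_TT: "T \<in> TT \<Longrightarrow> card T = t + 2"
    and card_TT_Int_U: "T \<in> TT \<Longrightarrow> t \<le> card (T \<inter> U)"
    and TT_t_intersecting: "T1 \<in> TT \<Longrightarrow> T2 \<in> TT \<Longrightarrow> t \<le> card (T1 \<inter> T2)"
begin

definition near_sets :: "'a \<Rightarrow> 'a set set" where
  "near_sets r = {S. S \<subseteq> U \<union> R \<and> card S = t + 2 \<and> t + 1 \<le> card (S \<inter> insert r U)}"

definition deficient :: "'a set set" where
  "deficient = {T \<in> TT. \<not> U \<subseteq> T}"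

definition repeated_pair :: "'a set \<Rightarrow> bool" where
  "repeated_pair e \<longleftrightarrow>
     (\<exists>A\<in>deficient. \<exists>B\<in>deficient. U - A \<noteq> U - B \<and> A - U = e \<and> B - U = e)"

lemma finite_TT_member: "T \<in> TT \<Longrightarrow> finite T"
  using TT_subset finite_U finite_R finite_subset by blast

lemma card_TT_le: "card TT \<le> (m + 1) + card deficient"
proof -
  have "{T \<in> TT. U \<subseteq> T} \<subseteq> (\<lambda>r. insert r U) ` R"
  proof
    fix T assume T: "T \<in> {T \<in> TT. U \<subseteq> T}"
    then have "card (T - U) = 1"
      using card_TT finite_U card_U by (simp add: card_Diff_subset)
    then obtain r where "T - U = {r}" by (rule card_1_singletonE)
    then show "T \<in> (\<lambda>r. insert r U) ` R" using T TT_subset by blast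
  qed
  then have "card {T \<in> TT. U \<subseteq> T} \<le> card ((\<lambda>r. insert r U) ` R)"
    using finite_R by (intro card_mono) auto
  also have "\<dots> \<le> m + 1" using finite_R card_R card_image_le by metis
  finally have "card {T \<in> TT. U \<subseteq> T} \<le> m + 1" .
  moreover have "{T \<in> TT. U \<subseteq> T} \<union> deficient = TT" unfolding deficient_def by blast
  ultimately show ?thesis using card_Un_le[of "{T \<in> TT. U \<subseteq> T}" deficient] by simp
qed

lemma deficient_shape:
  assumes "T \<in> deficient"
  shows "card (T \<inter> U) = t" "card (U - T) = 1" "T - U \<subseteq> R" "card (T - U) = 2"
proof -
  have T: "T \<in> TT" "\<not> U \<subseteq> T" using assms unfolding deficient_def by auto
  have "card (T \<inter> U) < card U"
    using T(2) finite_U by (intro psubset_card_mono) auto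
  then show "card (T \<inter> U) = t" using card_TT_Int_U[OF T(1)] card_U by simp
  then show "card (U - T) = 1" "card (T - U) = 2"
    using card_U card_TT[OF T(1)] finite_TT_member[OF T(1)]
    by (simp_all add: card_Diff_subset_Int Int_commute)
  show "T - U \<subseteq> R" using TT_subset[OF T(1)] by blast
qed

lemma deficient_pair:
  assumes "T \<in> deficient" "w \<in> T - U"
  obtains z where "z \<noteq> w" "z \<in> R" "T - U = {w, z}"
proof -
  obtain a b where ab: "T - U = {a, b}" "a \<noteq> b"
    using deficient_shape(4)[OF assms(1)] by (auto simp: card_2_iff)
  moreover have "a \<in> R" "b \<in> R" using ab deficient_shape(3)[OF assms(1)] by auto
  ultimately consider "w = a" | "w = b" using assms(2) by blast
  then show ?thesis
  proof cases
    case 1 then show ?thesis using that[of b] ab \<open>b \<in> R\<close> by simp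
  next
    case 2 then show ?thesis using that[of a] ab \<open>a \<in> R\<close> by (simp add: insert_commute)
  qed
qed

lemma deficient_outer_parts_meet:
  assumes A: "A \<in> deficient" and B: "B \<in> deficient" and "U - A \<noteq> U - B"
  shows "(A - U) \<inter> (B - U) \<noteq> {}"
proof
  assume outer_disjoint: "(A - U) \<inter> (B - U) = {}"
  obtain u v where "U - A = {u}" "U - B = {v}"
    using deficient_shape(2) A B by (metis card_1_singletonE)
  with \<open>U - A \<noteq> U - B\<close> have "A \<inter> B \<subseteq> U - {u, v}" "u \<noteq> v" "u \<in> U" "v \<in> U"
    using outer_disjoint by auto
  then have "card (A \<inter> B) \<le> t - 1"
    using finite_U card_U card_mono[OF _ \<open>A \<inter> B \<subseteq> _\<close>] by (simp add: card_Diff_subset)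
  moreover have "t \<le> card (A \<inter> B)"
    using A B TT_t_intersecting unfolding deficient_def by blast
  ultimately show False using t_pos by linarith
qed

lemma repeated_pair_meets:
  assumes "repeated_pair e" "T \<in> deficient"
  shows "e \<inter> (T - U) \<noteq> {}"
proof -
  obtain A B where AB: "A \<in> deficient" "B \<in> deficient" "U - A \<noteq> U - B"
    "A - U = e" "B - U = e"
    using assms(1) unfolding repeated_pair_def by blast
  show ?thesis
  proof (cases "U - A = U - T")
    case True
    then show ?thesis using AB deficient_outer_parts_meet[OF AB(2) assms(2)] by simp
  next
    case False
    then show ?thesis using AB deficient_outer_parts_meet[OF AB(1) assms(2)] by simp
  qed
qed

lemma repeated_pair_subset: "repeated_pair e \<Longrightarrow> e \<subseteq> R \<and> card e = 2"
  unfolding repeated_pair_def using deficient_shape(3,4) by auto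

lemma card_deficient_fiber: "card {T \<in> deficient. T - U = e} \<le> t + 1"
proof -
  have "{T \<in> deficient. T - U = e} \<subseteq> (\<lambda>u. e \<union> (U - {u})) ` U"
  proof
    fix T assume T: "T \<in> {T \<in> deficient. T - U = e}"
    then have "card (U - T) = 1" using deficient_shape(2) by blast
    then obtain u where "U - T = {u}" by (rule card_1_singletonE)
    then show "T \<in> (\<lambda>u. e \<union> (U - {u})) ` U" using T by (intro image_eqI[of _ _ u]) auto
  qed
  then have "card {T \<in> deficient. T - U = e} \<le> card ((\<lambda>u. e \<union> (U - {u})) ` U)"
    using finite_U by (intro card_mono) auto
  also have "\<dots> \<le> t + 1" using finite_U card_U card_image_le by metis
  finally show ?thesis .
qed

lemma card_deficient_unrepeated:
  assumes "finite Q" "\<forall>e\<in>Q. \<not> repeated_pair e"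
  shows "card {T \<in> deficient. T - U \<in> Q} \<le> card Q"
proof (rule card_inj_on_le)
  show "inj_on (\<lambda>T. T - U) {T \<in> deficient. T - U \<in> Q}"
  proof (rule inj_onI)
    fix A B assume "A \<in> {T \<in> deficient. T - U \<in> Q}" "B \<in> {T \<in> deficient. T - U \<in> Q}"
      and "A - U = B - U"
    then have "U - A = U - B" using assms(2) unfolding repeated_pair_def by blast
    with \<open>A - U = B - U\<close> show "A = B" by blast
  qed
qed (use assms in auto)

lemma card_deficient_le:
  assumes "finite P" "finite Q" "\<forall>e\<in>Q. \<not> repeated_pair e"
    and "\<forall>T\<in>deficient. T - U \<in> P \<union> Q"
  shows "card deficient \<le> (t + 1) * card P + card Q"
proof -
  let ?fiber = "\<lambda>e. {T \<in> deficient. T - U = e}"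
  have "(\<Union>e\<in>P. ?fiber e) \<union> {T \<in> deficient. T - U \<in> Q} = deficient"
    using assms(4) by blast
  then have "card deficient
      \<le> card (\<Union>e\<in>P. ?fiber e) + card {T \<in> deficient. T - U \<in> Q}"
    using card_Un_le[of "\<Union>e\<in>P. ?fiber e" "{T \<in> deficient. T - U \<in> Q}"] by simp
  also have "\<dots> \<le> (\<Sum>e\<in>P. card (?fiber e)) + card Q"
    using card_UN_le[OF assms(1)] card_deficient_unrepeated[OF assms(2,3)] by (rule add_mono)
  also have "(\<Sum>e\<in>P. card (?fiber e)) \<le> card P * (t + 1)"
    using sum_bounded_above[of P "\<lambda>e. card (?fiber e)" "t + 1"] card_deficient_fiber by simp
  finally show ?thesis by (simp add: mult.commute)
qed

lemma card_deficient_no_repeated: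
  assumes "\<nexists>e. repeated_pair e"
  shows "card deficient \<le> (m + 1 choose 2)"
proof -
  have "card deficient \<le> card {e. e \<subseteq> R \<and> card e = 2}"
    using card_deficient_le[of "{}" "{e. e \<subseteq> R \<and> card e = 2}"] assms
      deficient_shape(3,4) finite_R by auto
  then show ?thesis using n_subsets[OF finite_R] card_R by simp
qed

lemma card_deficient_single_repeated:
  assumes "repeated_pair e" "\<forall>e'. repeated_pair e' \<longrightarrow> e' = e"
  shows "card deficient \<le> (t + 1) + 2 * (m - 1)"
proof -
  obtain x y where e: "e = {x, y}" "x \<noteq> y" and "e \<subseteq> R"
    using repeated_pair_subset[OF assms(1)] by (auto simp: card_2_iff)
  define Q where "Q = (\<lambda>z. {x, z}) ` (R - e) \<union> (\<lambda>z. {y, z}) ` (R - e)"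
  have "T - U \<in> {e} \<union> Q" if T: "T \<in> deficient" for T
  proof (cases "T - U = e")
    case False
    obtain w where w: "w \<in> e" "w \<in> T - U" using repeated_pair_meets[OF assms(1) T] by blast
    then obtain z where z: "z \<noteq> w" "z \<in> R" "T - U = {w, z}" using deficient_pair[OF T] by blast
    have "z \<notin> e" using False w z e by auto
    then show ?thesis using w z e unfolding Q_def by auto
  qed simp
  moreover have "\<not> repeated_pair e'" if "e' \<in> Q" for e'
  proof -
    have "e' \<noteq> e" using that unfolding Q_def by blast
    then show ?thesis using assms(2) by blast
  qed
  moreover have "finite Q" unfolding Q_def using finite_R by simp
  ultimately have "card deficient \<le> (t + 1) * card {e} + card Q"
    by (intro card_deficient_le) auto
  moreover have "card Q \<le> 2 * (m - 1)"
  proof -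
    have "card Q \<le> card ((\<lambda>z. {x, z}) ` (R - e)) + card ((\<lambda>z. {y, z}) ` (R - e))"
      unfolding Q_def by (rule card_Un_le)
    also have "\<dots> \<le> card (R - e) + card (R - e)"
      using finite_R by (intro add_mono card_image_le) auto
    also have "card (R - e) = m - 1"
      using e \<open>e \<subseteq> R\<close> finite_R card_R by (simp add: card_Diff_subset)
    finally show ?thesis by simp
  qed
  ultimately show ?thesis by simp
qed

lemma repeated_pairs_share_point:
  assumes "repeated_pair e0" "repeated_pair e1" "e0 \<noteq> e1"
  obtains r x1 x2 where "e0 = {r, x1}" "e1 = {r, x2}" "r \<noteq> x1" "r \<noteq> x2" "x1 \<noteq> x2"
proof -
  obtain A1 where "A1 \<in> deficient" "A1 - U = e1"
    using assms(2) unfolding repeated_pair_def by blast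
  then obtain r where "r \<in> e0" "r \<in> e1" using repeated_pair_meets[OF assms(1)] by blast
  moreover have "card e0 = 2" "card e1 = 2" using repeated_pair_subset assms by auto
  ultimately obtain x1 x2 where "e0 = {r, x1}" "e1 = {r, x2}" "r \<noteq> x1" "r \<noteq> x2"
    by (metis card_2_iff doubleton_eq_iff insertE singletonD)
  with assms(3) show ?thesis using that by blast
qed

lemma card_deficient_two_repeated:
  assumes rep: "repeated_pair {r, x1}" "repeated_pair {r, x2}" and "x1 \<noteq> x2"
    and T0: "T0 \<in> deficient" "r \<notin> T0"
  shows "card deficient \<le> 3 * (t + 1) + (m - 2)"
proof -
  have "{r, x1} \<subseteq> R" "{r, x2} \<subseteq> R" "r \<noteq> x1" "r \<noteq> x2"
    using repeated_pair_subset[OF rep(1)] repeated_pair_subset[OF rep(2)] by (auto simp: card_2_iff)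
  have avoiding_r: "T - U = {x1, x2}" if T: "T \<in> deficient" "r \<notin> T" for T
  proof -
    have "{x1, x2} \<subseteq> T - U"
      using repeated_pair_meets[OF rep(1) T(1)] repeated_pair_meets[OF rep(2) T(1)] T(2) by blast
    moreover have "card (T - U) = card {x1, x2}"
      using deficient_shape(4)[OF T(1)] \<open>x1 \<noteq> x2\<close> by simp
    ultimately show ?thesis using deficient_shape(3)[OF T(1)] finite_R
      by (metis card_subset_eq finite_subset)
  qed
  define P where "P = {{r, x1}, {r, x2}, {x1, x2}}"
  define Q where "Q = (\<lambda>y. {r, y}) ` (R - {r, x1, x2})"
  have "T - U \<in> P \<union> Q" if T: "T \<in> deficient" for T
  proof (cases "r \<in> T")
    case True
    then have "r \<in> T - U" using \<open>{r, x1} \<subseteq> R\<close> disjoint by blast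
    then obtain y where "y \<noteq> r" "y \<in> R" "T - U = {r, y}" using deficient_pair[OF T] by blast
    then show ?thesis unfolding P_def Q_def by auto
  next
    case False
    then show ?thesis using avoiding_r[OF T] unfolding P_def by simp
  qed
  moreover have "\<not> repeated_pair e" if "e \<in> Q" for e
  proof
    assume "repeated_pair e"
    moreover obtain y where "e = {r, y}" "y \<notin> {r, x1, x2}"
      using \<open>e \<in> Q\<close> unfolding Q_def by blast
    ultimately show False
      using repeated_pair_meets[OF _ T0(1)] avoiding_r[OF T0] \<open>r \<noteq> x1\<close> \<open>r \<noteq> x2\<close>
      by auto
  qed
  moreover have "finite Q" unfolding Q_def using finite_R by simp
  ultimately have "card deficient \<le> (t + 1) * card P + card Q"
    by (intro card_deficient_le) (auto simp: P_def)
  moreover have "(t + 1) * card P \<le> 3 * (t + 1)" unfolding P_def by (simp add: card_insert_if)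
  moreover have "card Q \<le> m - 2"
  proof -
    have "card Q \<le> card (R - {r, x1, x2})" unfolding Q_def using finite_R by (simp add: card_image_le)
    also have "\<dots> = m - 2"
      using \<open>{r, x1} \<subseteq> R\<close> \<open>{r, x2} \<subseteq> R\<close> \<open>r \<noteq> x1\<close> \<open>r \<noteq> x2\<close> \<open>x1 \<noteq> x2\<close>
        finite_R card_R
      by (simp add: card_Diff_subset)
    finally show ?thesis .
  qed
  ultimately show ?thesis by linarith
qed

lemma TT_subset_near_sets:
  assumes "r \<in> R" "\<forall>T\<in>deficient. r \<in> T"
  shows "TT \<subseteq> near_sets r"
proof
  fix T assume T: "T \<in> TT"
  have "t + 1 \<le> card (T \<inter> insert r U)"
  proof (cases "U \<subseteq> T")
    case True
    then show ?thesis using finite_TT_member[OF T] card_U card_mono[of "T \<inter> insert r U" U] by auto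
  next
    case False
    then have "T \<in> deficient" using T unfolding deficient_def by blast
    moreover have "r \<notin> U" using assms(1) disjoint by blast
    ultimately have "card (insert r (T \<inter> U)) = t + 1" "r \<in> T"
      using deficient_shape(1) assms(2) finite_TT_member[OF T] by auto
    then show ?thesis
      using finite_TT_member[OF T] card_mono[of "T \<inter> insert r U" "insert r (T \<inter> U)"] by auto
  qed
  then show "T \<in> near_sets r" using T TT_subset card_TT unfolding near_sets_def by blast
qed

lemma finite_near_sets: "finite (near_sets r)"
proof (rule finite_subset)
  show "near_sets r \<subseteq> Pow (U \<union> R)" unfolding near_sets_def by blast
qed (use finite_U finite_R in simp)

lemma card_near_sets_le:
  assumes "r \<in> R"
  shows "card (near_sets r) \<le> (t + 2) * m + 1"
proof -
  have "r \<notin> U" using assms disjoint by blast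
  then have "card (insert r U) = t + 2" using finite_U card_U by simp
  then have "card (near_sets r) \<le> 1 + (t + 2) * card ((U \<union> R) - insert r U)"
    using card_near_subsets_le[of "U \<union> R" "insert r U" "t + 1"] assms finite_U finite_R
    unfolding near_sets_def by (simp add: insert_absorb)
  also have "(U \<union> R) - insert r U = R - {r}" using disjoint by blast
  finally show ?thesis using assms finite_R card_R by simp
qed

theorem card_less_or_near_sets:
  assumes "3 \<le> m"
  shows "card TT < tcov_bound t m \<or> (\<exists>r\<in>R. TT = near_sets r)"
proof -
  consider (none) "\<nexists>e. repeated_pair e"
    | (single) e where "repeated_pair e" "\<forall>e'. repeated_pair e' \<longrightarrow> e' = e"
    | (two) e0 e1 where "repeated_pair e0" "repeated_pair e1" "e0 \<noteq> e1"
    by blast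
  then show ?thesis
  proof cases
    case none
    then have "card TT < tcov_bound t m"
      using card_TT_le card_deficient_no_repeated tcov_bound_gt_pairs[OF assms, of t] by fastforce
    then show ?thesis ..
  next
    case single
    then have "card TT \<le> 3 * m + t"
      using card_TT_le card_deficient_single_repeated[OF single] assms by linarith
    then show ?thesis using tcov_bound_gt_single_pair[OF assms t_pos] by simp
  next
    case two
    then obtain r x1 x2 where "e0 = {r, x1}" "e1 = {r, x2}" "x1 \<noteq> x2"
      by (rule repeated_pairs_share_point)
    with two have rep: "repeated_pair {r, x1}" "repeated_pair {r, x2}" and "r \<in> R"
      using repeated_pair_subset by auto
    show ?thesis
    proof (cases "\<forall>T\<in>deficient. r \<in> T")
      case True
      then have "TT \<subseteq> near_sets r" using TT_subset_near_sets \<open>r \<in> R\<close> by blast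
      then have "TT = near_sets r \<or> card TT < card (near_sets r)"
        using finite_near_sets psubset_card_mono by blast
      moreover have "card (near_sets r) \<le> tcov_bound t m"
        using card_near_sets_le[OF \<open>r \<in> R\<close>] tcov_bound_ge(2)[where t=t and m=m]
        by (simp add: algebra_simps)
      ultimately show ?thesis using \<open>r \<in> R\<close> by auto
    next
      case False
      then obtain T0 where T0: "T0 \<in> deficient" "r \<notin> T0" by blast
      have "card TT \<le> 2 * m + 3 * t + 2"
        using card_TT_le card_deficient_two_repeated[OF rep \<open>x1 \<noteq> x2\<close> T0] assms
        by fastforce
      then show ?thesis using tcov_bound_gt_two_pairs[OF assms t_pos] by simp
    qed
  qed
qed

end

lemma cover_configuration_Tcov:
  assumes "2 * k < n" "t + 3 \<le> k" "maximal_t_intersecting n k t F"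
    and "tau n t F = t + 2" "tau n t (Tcov n t F) = t + 1"
    and "U0 \<in> Ucov n t F" "F0 \<in> F" "card (U0 \<inter> F0) + 1 = t"
    and "Tcov n t F \<subseteq> {S. S \<subseteq> U0 \<union> F0 \<and> card S = t + 2}"
  shows "cover_configuration t (k - t) U0 (F0 - U0) (Tcov n t F)"
proof -
  have U0: "t_cover n t (Tcov n t F) U0" "card U0 = t + 1"
    using assms(5,6) unfolding Ucov_def Tcov_def by auto
  then have "finite U0" unfolding t_cover_def by (auto intro: finite_subset)
  have F0: "finite F0" "card F0 = k"
    using assms(3,7) finite_subset unfolding maximal_t_intersecting_def ksubsets_def by auto
  have covers: "t_cover n t F T" "card T = t + 2" if "T \<in> Tcov n t F" for T
    using that assms(4) unfolding Tcov_def by auto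
  show ?thesis
  proof
    show "card (F0 - U0) = k - t + 1"
      using F0 assms(2,8) by (simp add: card_Diff_subset_Int Int_commute)
    show "t \<le> card (T1 \<inter> T2)" if "T1 \<in> Tcov n t F" "T2 \<in> Tcov n t F" for T1 T2
      using t_covers_t_intersect[OF assms(3)] covers that assms(1,2) by simp
    show "t \<le> card (T \<inter> U0)" if "T \<in> Tcov n t F" for T
      using U0(1) that unfolding t_cover_def by (simp add: Int_commute)
  qed (use assms(8,9) U0 \<open>finite U0\<close> F0 covers in auto)
qed

theorem lemma2p8:
  fixes n k t :: nat and F :: "nat set set" and U0 F0 :: "nat set"
  assumes "n > 2 * k" and "k \<ge> t + 3"
    and "F \<subseteq> ksubsets n k"
    and "maximal_t_intersecting n k t F"
    and "tau n t F = t + 2"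
    and "tau n t (Tcov n t F) = t + 1"
    and "U0 \<in> Ucov n t F" and "F0 \<in> F"
    and "card (U0 \<inter> F0) + 1 = t"
    and "Tcov n t F \<subseteq> {S. S \<subseteq> U0 \<union> F0 \<and> card S = t + 2}"
  shows "card (Tcov n t F) < max (max ((k - t) * (k - t + 1)) ((t + 2) * (k - t) + 1)) ((t + 4) choose 2)
    \<or> (\<exists>M W. M \<in> ksubsets n (k + 2) \<and> W \<subseteq> M \<and> card W = t + 2 \<and>
          Tcov n t F = {T. T \<subseteq> M \<and> card T = t + 2 \<and> t + 1 \<le> card (T \<inter> W)})"
proof -
  interpret cover_configuration t "k - t" U0 "F0 - U0" "Tcov n t F"
    using cover_configuration_Tcov assms(1,2,4-10) by blast
  have "U0 \<union> (F0 - U0) \<in> ksubsets n (k + 2)"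
  proof -
    have "U0 \<subseteq> {1..n}" using assms(6,7) unfolding Ucov_def Tcov_def t_cover_def by blast
    moreover have "F0 \<subseteq> {1..n}" using assms(3,8) unfolding ksubsets_def by blast
    moreover have "card (U0 \<union> (F0 - U0)) = k + 2"
      using card_Un_disjoint[OF finite_U finite_R disjoint] card_U card_R assms(2) by simp
    ultimately show ?thesis unfolding ksubsets_def by blast
  qed
  moreover have "insert r U0 \<subseteq> U0 \<union> (F0 - U0)" "card (insert r U0) = t + 2"
    if "r \<in> F0 - U0" for r
    using that finite_U card_U by auto
  ultimately show ?thesis
    using card_less_or_near_sets assms(2) unfolding tcov_bound_def near_sets_def by fastforce
qed

end
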